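(* Let $k\ge3$, $k\le d$, and fix $p\in\{1,\dots,k-1\}$ and $t\in[0,1)$ such that either ($p=1$ and $t\ne0$), or $p\in\{2,\dots,k-2\}$, or ($p=k-1$ and $t<\frac{d-k+1}{d-k+2}$). Then there exists a constant $\delta_0>0$ depending only on $(p,t,k,d)$ such that every exact-repair regenerating code with parameters $\{(n,k,d),(\alpha,\beta),B\}$, $n\ge d+1$, with $\alpha=(d-p+1-t)\beta$ satisfies $$\frac{\beta}{B}\ \ge\ \frac{\beta}{\hat B}+\delta_0 ,$$ where $\hat B=\sum_{i=1}^k\min\{\alpha,(d-i+1)\beta\}$. In particular, at these operating points the storage–repair-bandwidth tradeoff of exact-repair regenerating codes is strictly (and uniformly in $\beta,B$) bounded away from the functional-repair tradeoff.
   Context: Setting: fix integers $k\le d<n$, a finite field $\mathbb{F}_q$, and reals $\alpha,\beta>0$. An exact-repair regenerating code with parameters $\{(n,k,d),(\alpha,\beta),B\}$: a file $M$ uniformly distributed over $\mathbb{F}_q^B$ (entropies measured in units of $\log q$); node $i\in[n]$ stores $W_i$, a deterministic function of $M$, with $H(W_i)\le\alpha$; (data collection) for every $K\subseteq[n]$ with $|K|=k$, $M$ is a function of $(W_a)_{a\in K}$; (exact repair) for every node $y$ and every set $D\subseteq[n]\setminus\{y\}$ with $|D|=d$, each $x\in D$ sends helper data (depending on $y$ and $D$), a deterministic function of $W_x$ of entropy at most $\beta$, from which $W_y$ is exactly recoverable. The quantity $\hat B$ is the optimal file size under functional repair (cut-set bound). *)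

theory Defs
  imports Complex_Main "HOL-Number_Theory.Prime_Powers"
begin

text \<open>The field F_q is represented by its underlying set {0..<q} (q a prime power);
  only the uniform distribution of the file matters.\<close>

definition file_space :: "nat \<Rightarrow> nat \<Rightarrow> nat list set" where
  "file_space q B = {xs. length xs = B \<and> set xs \<subseteq> {..<q}}"

definition ent :: "nat \<Rightarrow> 'm set \<Rightarrow> ('m \<Rightarrow> 'b) \<Rightarrow> real" where
  "ent q S g = (\<Sum>y\<in>g ` S.
      (real (card {m\<in>S. g m = y}) / real (card S)) *
      log (real q) (real (card S) / real (card {m\<in>S. g m = y})))"

text \<open>Nodes are 1..n; node i stores W i (M), a deterministic function of M (values encoded in nat,
  which is no loss of generality since the file space is finite). Helper data sent by x
  (depending on y and D) is a deterministic function h x of W x (M).\<close>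
definition exact_repair_code ::
  "nat \<Rightarrow> nat \<Rightarrow> nat \<Rightarrow> nat \<Rightarrow> real \<Rightarrow> real \<Rightarrow> nat \<Rightarrow> (nat \<Rightarrow> nat list \<Rightarrow> nat) \<Rightarrow> bool" where
  "exact_repair_code q n k d \<alpha> \<beta> B W \<longleftrightarrow>
     (\<forall>i\<in>{1..n}. ent q (file_space q B) (W i) \<le> \<alpha>) \<and>
     (\<forall>K. K \<subseteq> {1..n} \<and> card K = k \<longrightarrow>
        (\<forall>m1\<in>file_space q B. \<forall>m2\<in>file_space q B.
            (\<forall>a\<in>K. W a m1 = W a m2) \<longrightarrow> m1 = m2)) \<and>
     (\<forall>y\<in>{1..n}. \<forall>D. D \<subseteq> {1..n} - {y} \<and> card D = d \<longrightarrow>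
        (\<exists>h :: nat \<Rightarrow> nat \<Rightarrow> nat.
           (\<forall>x\<in>D. ent q (file_space q B) (\<lambda>m. h x (W x m)) \<le> \<beta>) \<and>
           (\<forall>m1\<in>file_space q B. \<forall>m2\<in>file_space q B.
              (\<forall>x\<in>D. h x (W x m1) = h x (W x m2)) \<longrightarrow> W y m1 = W y m2)))"

text \<open>Functional-repair (cut-set) optimal file size.\<close>
definition Bhat :: "nat \<Rightarrow> nat \<Rightarrow> real \<Rightarrow> real \<Rightarrow> real" where
  "Bhat k d \<alpha> \<beta> = (\<Sum>i=1..k. min \<alpha> ((real d - real i + 1) * \<beta>))"

end

theory Submission
  imports Defs
begin

text \<open>For a fixed code, the entropies of the stored contents and of the repair data form a
  polymatroid, subject to the storage, bandwidth, repair and data-collection constraints. By the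
  chain rule along \<open>k\<close> nodes, every increment of stored content is at most its cut-set term
  \<open>min \<alpha> ((d - i + 1) * \<beta>)\<close>, so the deficit \<open>gap = Bhat k d \<alpha> \<beta> - B\<close> bounds how far every such
  increment, and every helper message, may fall short of its extreme value. Below the MSR point
  this slack is incompatible with exact repair unless \<open>gap \<ge> \<epsilon> * \<beta>\<close>: at an interior operating
  point, the two messages that a node \<open>x\<close> sends for the repair of \<open>y\<close> and of \<open>z\<close> are nearly
  independent given \<open>p - 1\<close> stored contents, yet nearly determined by the contents of \<open>y\<close> and
  \<open>z\<close>, which contradicts data processing through the content of \<open>x\<close> when \<open>t > 0\<close>; next to the MSR
  point the same conclusion follows by summing over the \<open>d - k + 2\<close> nodes that help \<open>x\<close>.
  Since \<open>Bhat k d \<alpha> \<beta> = \<kappa> * \<beta>\<close> with \<open>\<kappa>\<close> depending only on \<open>(p, t, k, d)\<close>, the bound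
  \<open>B \<le> (\<kappa> - \<epsilon>) * \<beta>\<close> gives \<open>\<beta> / B \<ge> \<beta> / Bhat k d \<alpha> \<beta> + \<epsilon> / \<kappa>\<^sup>2\<close>.\<close>

section \<open>Entropy of functions of a uniformly distributed file\<close>

definition fiber_card :: "'m set \<Rightarrow> ('m \<Rightarrow> 'b) \<Rightarrow> 'm \<Rightarrow> nat" where
  "fiber_card S f m = card {m'\<in>S. f m' = f m}"

text \<open>For \<open>M\<close> uniform on \<open>S\<close>, \<open>surprisal_sum S f\<close> is \<open>card S\<close> times the entropy of \<open>f M\<close> in nats.\<close>
definition surprisal_sum :: "'m set \<Rightarrow> ('m \<Rightarrow> 'b) \<Rightarrow> real" where
  "surprisal_sum S f = (\<Sum>m\<in>S. ln (real (card S) / real (fiber_card S f m)))"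

lemma fiber_card_pos: "finite S \<Longrightarrow> m \<in> S \<Longrightarrow> 0 < fiber_card S f m"
  unfolding fiber_card_def by (subst card_gt_0_iff) auto

lemma real_card_filter: "finite S \<Longrightarrow> real (card {x\<in>S. P x}) = (\<Sum>x\<in>S. if P x then 1 else 0)"
  by (simp add: sum.If_cases Int_def)

lemma ent_eq_surprisal_sum:
  assumes "finite S"
  shows "ent q S f = surprisal_sum S f / (real (card S) * ln (real q))"
proof -
  have "surprisal_sum S f = (\<Sum>y\<in>f ` S. \<Sum>m\<in>{x\<in>S. f x = y}. ln (real (card S) / real (fiber_card S f m)))"
    unfolding surprisal_sum_def by (rule sum.image_gen[OF assms])
  also have "\<dots> = (\<Sum>y\<in>f ` S. real (card {m\<in>S. f m = y}) * ln (real (card S) / real (card {m\<in>S. f m = y})))"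
  proof (rule sum.cong[OF refl])
    fix y assume "y \<in> f ` S"
    have "fiber_card S f m = card {m\<in>S. f m = y}" if "m \<in> {x\<in>S. f x = y}" for m
      using that by (auto simp: fiber_card_def)
    then show "(\<Sum>m\<in>{x\<in>S. f x = y}. ln (real (card S) / real (fiber_card S f m)))
        = real (card {m\<in>S. f m = y}) * ln (real (card S) / real (card {m\<in>S. f m = y}))"
      by simp
  qed
  finally show ?thesis
    by (simp add: ent_def log_def sum_divide_distrib mult.commute)
qed

lemma surprisal_sum_cong:
  assumes "\<And>m1 m2. m1 \<in> S \<Longrightarrow> m2 \<in> S \<Longrightarrow> f m1 = f m2 \<longleftrightarrow> g m1 = g m2"
  shows "surprisal_sum S f = surprisal_sum S g"
proof -
  have "fiber_card S f m = fiber_card S g m" if "m \<in> S" for m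
    unfolding fiber_card_def using assms that by (intro arg_cong[where f=card]) auto
  then show ?thesis unfolding surprisal_sum_def by (intro sum.cong) auto
qed

lemma surprisal_sum_le_pair:
  assumes "finite S"
  shows "surprisal_sum S f \<le> surprisal_sum S (\<lambda>m. (f m, g m))"
  unfolding surprisal_sum_def
proof (rule sum_mono)
  fix m assume m: "m \<in> S"
  have "0 < fiber_card S (\<lambda>m. (f m, g m)) m" by (rule fiber_card_pos[OF assms m])
  moreover have "fiber_card S (\<lambda>m. (f m, g m)) m \<le> fiber_card S f m"
    unfolding fiber_card_def using assms by (intro card_mono) auto
  moreover have "0 < card S" using assms m by (auto simp: card_gt_0_iff)
  ultimately show "ln (real (card S) / real (fiber_card S f m))
      \<le> ln (real (card S) / real (fiber_card S (\<lambda>m. (f m, g m)) m))"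
    by (auto intro!: divide_left_mono)
qed

lemma surprisal_sum_inj:
  assumes "finite S" "inj_on f S"
  shows "surprisal_sum S f = real (card S) * ln (real (card S))"
proof -
  have "fiber_card S f m = 1" if "m \<in> S" for m
  proof -
    have "{m'\<in>S. f m' = f m} = {m}" using assms(2) that by (auto simp: inj_on_def)
    then show ?thesis by (simp add: fiber_card_def)
  qed
  then show ?thesis unfolding surprisal_sum_def by simp
qed

lemma surprisal_sum_const:
  assumes "\<And>m. m \<in> S \<Longrightarrow> f m = c"
  shows "surprisal_sum S f = 0"
proof -
  have "fiber_card S f m = card S" if "m \<in> S" for m
    unfolding fiber_card_def using assms that by (intro arg_cong[where f=card]) auto
  then show ?thesis unfolding surprisal_sum_def by simp
qed

lemma sum_inverse_fiber_card_le:
  fixes X :: "'m \<Rightarrow> 'a" and Y :: "'m \<Rightarrow> 'b" and Z :: "'m \<Rightarrow> 'c"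
  assumes S: "finite S" and m1: "m1 \<in> S" and m2: "m2 \<in> S"
  shows "(\<Sum>m\<in>S. if (X m1 = X m \<and> Z m1 = Z m) \<and> (Y m2 = Y m \<and> Z m2 = Z m)
           then 1 / (real (fiber_card S (\<lambda>m. (X m, Y m, Z m)) m) * real (fiber_card S Z m)) else 0)
         \<le> (if Z m1 = Z m2 then 1 / real (fiber_card S Z m1) else 0)"
    (is "?L \<le> ?R")
proof -
  define T where "T = {m\<in>S. X m = X m1 \<and> Y m = Y m2 \<and> Z m = Z m1 \<and> Z m = Z m2}"
  have L: "?L = (\<Sum>m\<in>T. 1 / (real (fiber_card S (\<lambda>m. (X m, Y m, Z m)) m) * real (fiber_card S Z m)))"
    unfolding T_def using S by (simp add: sum.If_cases Int_def conj_commute eq_commute conj_left_commute)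
  show ?thesis
  proof (cases "T = {}")
    case True
    then show ?thesis using L by simp
  next
    case False
    then have z12: "Z m1 = Z m2" by (auto simp: T_def)
    have "fiber_card S (\<lambda>m. (X m, Y m, Z m)) m = card T" if "m \<in> T" for m
      unfolding fiber_card_def using that by (intro arg_cong[where f=card]) (auto simp: T_def)
    moreover have "fiber_card S Z m = fiber_card S Z m1" if "m \<in> T" for m
      unfolding fiber_card_def using that by (intro arg_cong[where f=card]) (auto simp: T_def)
    ultimately have "?L = (\<Sum>m\<in>T. 1 / (real (card T) * real (fiber_card S Z m1)))"
      unfolding L by (intro sum.cong) auto
    also have "\<dots> = 1 / real (fiber_card S Z m1)"
      using False S by (simp add: T_def card_gt_0_iff)
    finally show ?thesis using z12 by simp
  qed
qed

text \<open>The counting inequality behind submodularity: after expanding the fiber sizes into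
  indicator sums and exchanging summations, the pairs \<open>(m1, m2)\<close> contribute at most \<open>1\<close> for
  each \<open>m1\<close>.\<close>
lemma sum_fiber_ratio_le_card:
  fixes X :: "'m \<Rightarrow> 'a" and Y :: "'m \<Rightarrow> 'b" and Z :: "'m \<Rightarrow> 'c"
  assumes S: "finite S"
  shows "(\<Sum>m\<in>S. real (fiber_card S (\<lambda>m. (X m, Z m)) m) * real (fiber_card S (\<lambda>m. (Y m, Z m)) m)
            / (real (fiber_card S (\<lambda>m. (X m, Y m, Z m)) m) * real (fiber_card S Z m))) \<le> real (card S)"
proof -
  define c where "c m = real (fiber_card S (\<lambda>m. (X m, Y m, Z m)) m) * real (fiber_card S Z m)" for m
  define \<chi> where "\<chi> m m1 m2 \<longleftrightarrow> (X m1 = X m \<and> Z m1 = Z m) \<and> (Y m2 = Y m \<and> Z m2 = Z m)" for m m1 m2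
  have pointwise: "real (fiber_card S (\<lambda>m. (X m, Z m)) m) * real (fiber_card S (\<lambda>m. (Y m, Z m)) m) / c m
      = (\<Sum>m1\<in>S. \<Sum>m2\<in>S. if \<chi> m m1 m2 then 1 / c m else 0)" for m
    unfolding fiber_card_def real_card_filter[OF S] sum_product sum_divide_distrib \<chi>_def
    by (intro sum.cong refl) auto
  have "(\<Sum>m\<in>S. real (fiber_card S (\<lambda>m. (X m, Z m)) m) * real (fiber_card S (\<lambda>m. (Y m, Z m)) m) / c m)
      = (\<Sum>m\<in>S. \<Sum>m1\<in>S. \<Sum>m2\<in>S. if \<chi> m m1 m2 then 1 / c m else 0)"
    unfolding pointwise ..
  also have "\<dots> = (\<Sum>m1\<in>S. \<Sum>m2\<in>S. \<Sum>m\<in>S. if \<chi> m m1 m2 then 1 / c m else 0)"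
    by (subst sum.swap) (subst (2) sum.swap, rule refl)
  also have "\<dots> \<le> (\<Sum>m1\<in>S. \<Sum>m2\<in>S. if Z m1 = Z m2 then 1 / real (fiber_card S Z m1) else 0)"
    unfolding c_def \<chi>_def by (intro sum_mono sum_inverse_fiber_card_le[OF S])
  also have "\<dots> = (\<Sum>m1\<in>S. 1)"
  proof (rule sum.cong[OF refl])
    fix m1 assume m1: "m1 \<in> S"
    have "(\<Sum>m2\<in>S. if Z m1 = Z m2 then 1 / real (fiber_card S Z m1) else 0)
        = real (fiber_card S Z m1) / real (fiber_card S Z m1)"
      unfolding fiber_card_def real_card_filter[OF S] sum_divide_distrib
      by (intro sum.cong) auto
    also have "\<dots> = 1" using fiber_card_pos[OF S m1, of Z] by simp
    finally show "(\<Sum>m2\<in>S. if Z m1 = Z m2 then 1 / real (fiber_card S Z m1) else 0) = 1" .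
  qed
  finally show ?thesis by (simp add: c_def)
qed

lemma surprisal_sum_submodular:
  fixes X :: "'m \<Rightarrow> 'a" and Y :: "'m \<Rightarrow> 'b" and Z :: "'m \<Rightarrow> 'c"
  assumes S: "finite S"
  shows "surprisal_sum S (\<lambda>m. (X m, Y m, Z m)) + surprisal_sum S Z
    \<le> surprisal_sum S (\<lambda>m. (X m, Z m)) + surprisal_sum S (\<lambda>m. (Y m, Z m))"
proof -
  define a where "a m = real (fiber_card S (\<lambda>m. (X m, Z m)) m)" for m
  define b where "b m = real (fiber_card S (\<lambda>m. (Y m, Z m)) m)" for m
  define c where "c m = real (fiber_card S (\<lambda>m. (X m, Y m, Z m)) m)" for m
  define e where "e m = real (fiber_card S Z m)" for m
  define N where "N = real (card S)"
  have pointwise: "1 - a m * b m / (c m * e m) \<le> ln (N / a m) + ln (N / b m) - ln (N / c m) - ln (N / e m)"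
    if m: "m \<in> S" for m
  proof -
    have pos: "0 < a m" "0 < b m" "0 < c m" "0 < e m" "0 < N"
      using fiber_card_pos[OF S m] m S unfolding a_def b_def c_def e_def N_def
      by (auto simp: card_gt_0_iff)
    then have "ln (a m * b m / (c m * e m)) \<le> a m * b m / (c m * e m) - 1"
      by (intro ln_le_minus_one) simp
    with pos show ?thesis by (simp add: ln_div ln_mult)
  qed
  have "N - (\<Sum>m\<in>S. a m * b m / (c m * e m)) \<le>
      (\<Sum>m\<in>S. ln (N / a m) + ln (N / b m) - ln (N / c m) - ln (N / e m))"
    using sum_mono[of S _ _, OF pointwise] by (simp add: sum_subtractf N_def)
  moreover have "(\<Sum>m\<in>S. a m * b m / (c m * e m)) \<le> N"
    unfolding a_def b_def c_def e_def N_def by (rule sum_fiber_ratio_le_card[OF S])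
  ultimately show ?thesis
    unfolding surprisal_sum_def a_def b_def c_def e_def N_def
    by (simp add: sum.distrib sum_subtractf)
qed

lemma ent_cong:
  assumes "finite S" "\<And>m1 m2. m1 \<in> S \<Longrightarrow> m2 \<in> S \<Longrightarrow> f m1 = f m2 \<longleftrightarrow> g m1 = g m2"
  shows "ent q S f = ent q S g"
  using assms by (simp add: ent_eq_surprisal_sum surprisal_sum_cong[of S f g])

lemma ent_inj:
  assumes "finite S" "S \<noteq> {}" "inj_on f S"
  shows "ent q S f = log (real q) (real (card S))"
  using assms by (simp add: ent_eq_surprisal_sum surprisal_sum_inj log_def card_gt_0_iff)

definition joint :: "('i \<Rightarrow> 'm \<Rightarrow> 'b) \<Rightarrow> 'i set \<Rightarrow> 'm \<Rightarrow> 'i \<Rightarrow> 'b option" where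
  "joint v A m = (\<lambda>a. if a \<in> A then Some (v a m) else None)"

lemma joint_eq_iff: "joint v A m1 = joint v A m2 \<longleftrightarrow> (\<forall>a\<in>A. v a m1 = v a m2)"
  unfolding joint_def fun_eq_iff by (metis option.inject option.distinct(1))

lemma ent_joint_singleton:
  assumes "finite S"
  shows "ent q S (joint v {a}) = ent q S (v a)"
  using assms by (rule ent_cong) (simp add: joint_eq_iff)

lemma ent_joint_determined:
  assumes "finite S"
    and "\<And>m1 m2. m1 \<in> S \<Longrightarrow> m2 \<in> S \<Longrightarrow> \<forall>a\<in>X. v a m1 = v a m2 \<Longrightarrow> \<forall>a\<in>Y. v a m1 = v a m2"
  shows "ent q S (joint v (X \<union> Y)) = ent q S (joint v X)"
proof (rule ent_cong[OF assms(1)])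
  fix m1 m2 assume "m1 \<in> S" "m2 \<in> S"
  then show "joint v (X \<union> Y) m1 = joint v (X \<union> Y) m2 \<longleftrightarrow> joint v X m1 = joint v X m2"
    using assms(2)[of m1 m2] unfolding joint_eq_iff by blast
qed

section \<open>Polymatroids\<close>

locale polymatroid =
  fixes h :: "'a set \<Rightarrow> real"
  assumes h_empty: "h {} = 0"
    and h_mono: "A \<subseteq> B \<Longrightarrow> h A \<le> h B"
    and h_submodular: "h (A \<union> B) + h (A \<inter> B) \<le> h A + h B"
begin

abbreviation hcond :: "'a set \<Rightarrow> 'a set \<Rightarrow> real" where
  "hcond X C \<equiv> h (X \<union> C) - h C"

abbreviation cmi :: "'a set \<Rightarrow> 'a set \<Rightarrow> 'a set \<Rightarrow> real" where
  "cmi X Y C \<equiv> hcond X C - hcond X (Y \<union> C)"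

lemma h_nonneg: "0 \<le> h A"
  using h_mono[of "{}" A] h_empty by simp

lemma hcond_nonneg: "0 \<le> hcond X C"
  using h_mono[of C "X \<union> C"] by simp

lemma hcond_le: "hcond X C \<le> h X"
  using h_submodular[of X C] h_nonneg[of "X \<inter> C"] by linarith

lemma hcond_antimono:
  assumes "C \<subseteq> C'"
  shows "hcond X C' \<le> hcond X C"
proof -
  have "h (X \<union> C') + h ((X \<union> C) \<inter> C') \<le> h (X \<union> C) + h C'"
    using h_submodular[of "X \<union> C" C'] assms by (simp add: Un_absorb1 Un_assoc)
  moreover have "h C \<le> h ((X \<union> C) \<inter> C')" by (rule h_mono) (use assms in auto)
  ultimately show ?thesis by linarith
qed

lemma hcond_subadditive: "hcond (U \<union> V) K \<le> hcond U K + hcond V K"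
proof -
  have "h (U \<union> V \<union> K) + h ((U \<union> K) \<inter> (V \<union> K)) \<le> h (U \<union> K) + h (V \<union> K)"
    using h_submodular[of "U \<union> K" "V \<union> K"] by (simp add: Un_ac)
  moreover have "h K \<le> h ((U \<union> K) \<inter> (V \<union> K))" by (rule h_mono) auto
  ultimately show ?thesis by linarith
qed

lemma hcond_Un_ge: "hcond U C + hcond V (D \<union> C) - hcond U (D \<union> C) \<le> hcond (U \<union> V) C"
proof -
  have "hcond V (U \<union> D \<union> C) \<le> hcond V (U \<union> C)" by (rule hcond_antimono) auto
  moreover have "h (V \<union> (D \<union> C)) \<le> h (V \<union> (U \<union> D \<union> C))" by (rule h_mono) auto
  ultimately show ?thesis by (simp add: Un_ac)
qed

lemma determined_Un:
  assumes "h (X \<union> Y) = h X"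
  shows "h (X \<union> Y \<union> K) = h (X \<union> K)"
  using hcond_antimono[of X "X \<union> K" Y] hcond_nonneg[of Y "X \<union> K"] assms
  by (simp add: Un_ac)

lemma cmi_data_processing:
  assumes "h (X \<union> U) = h X"
  shows "cmi U Y C \<le> cmi X Y C"
proof -
  have "h (X \<union> U \<union> C) = h (X \<union> C)" "h (X \<union> U \<union> (Y \<union> C)) = h (X \<union> (Y \<union> C))"
    by (rule determined_Un[OF assms])+
  moreover have "h (X \<union> U \<union> (Y \<union> C)) + h ((X \<union> U \<union> C) \<inter> (U \<union> (Y \<union> C)))
      \<le> h (X \<union> U \<union> C) + h (U \<union> (Y \<union> C))"
    using h_submodular[of "X \<union> U \<union> C" "U \<union> (Y \<union> C)"] by (simp add: Un_ac)
  moreover have "h (U \<union> C) \<le> h ((X \<union> U \<union> C) \<inter> (U \<union> (Y \<union> C)))" by (rule h_mono) auto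
  ultimately show ?thesis by linarith
qed

lemma cmi_ge_of_determined_pair:
  assumes "h (X \<union> (U \<union> V)) = h X"
  shows "hcond U C + hcond V (D \<union> C) - hcond U (D \<union> C) - hcond U (Y \<union> C) - hcond V (Y \<union> C)
    \<le> cmi X Y C"
  using cmi_data_processing[OF assms, where Y=Y and C=C] hcond_subadditive[of U V "Y \<union> C"]
    hcond_Un_ge[of U C V D]
  by linarith

lemma sum_cmi_le:
  assumes "finite Z"
  shows "(\<Sum>z\<in>Z. cmi U (f z) C)
    \<le> cmi U (\<Union>z\<in>Z. f z) C + (\<Sum>z\<in>Z. hcond (f z) C) - hcond (\<Union>z\<in>Z. f z) C"
  using assms
proof (induction Z rule: finite_induct)
  case empty
  then show ?case by simp
next
  case (insert z0 Z)
  define G where "G = (\<Union>z\<in>Z. f z)"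
  have "h (U \<union> (G \<union> (f z0 \<union> C))) + h ((U \<union> (f z0 \<union> C)) \<inter> (U \<union> (G \<union> C)))
      \<le> h (U \<union> (f z0 \<union> C)) + h (U \<union> (G \<union> C))"
    using h_submodular[of "U \<union> (f z0 \<union> C)" "U \<union> (G \<union> C)"] by (simp add: Un_ac)
  moreover have "h (U \<union> C) \<le> h ((U \<union> (f z0 \<union> C)) \<inter> (U \<union> (G \<union> C)))" by (rule h_mono) auto
  ultimately show ?case
    using insert.IH insert.hyps by (simp add: G_def[symmetric] Un_ac)
qed

end

lemma polymatroid_divide:
  assumes "polymatroid h" "0 \<le> c"
  shows "polymatroid (\<lambda>A. h A / c)"
proof -
  interpret polymatroid h by (fact assms(1))
  show ?thesis
    by unfold_locales
      (use assms(2) h_submodular in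
        \<open>auto simp: h_empty h_mono divide_right_mono add_divide_distrib[symmetric]\<close>)
qed

lemma polymatroid_surprisal_sum_joint:
  fixes v :: "'i \<Rightarrow> 'm \<Rightarrow> 'b"
  assumes S: "finite S"
  shows "polymatroid (\<lambda>A. surprisal_sum S (joint v A))"
proof
  show "surprisal_sum S (joint v {}) = 0"
    by (rule surprisal_sum_const[where c="\<lambda>a. None"]) (simp add: joint_def)
next
  fix A B :: "'i set"
  assume "A \<subseteq> B"
  have "surprisal_sum S (joint v A) \<le> surprisal_sum S (\<lambda>m. (joint v A m, joint v B m))"
    by (rule surprisal_sum_le_pair[OF S])
  also have "\<dots> = surprisal_sum S (joint v B)"
    by (rule surprisal_sum_cong) (use \<open>A \<subseteq> B\<close> in \<open>auto simp: joint_eq_iff\<close>)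
  finally show "surprisal_sum S (joint v A) \<le> surprisal_sum S (joint v B)" .
next
  fix A B :: "'i set"
  have "surprisal_sum S (\<lambda>m. (joint v A m, joint v B m, joint v (A \<inter> B) m))
      + surprisal_sum S (joint v (A \<inter> B))
     \<le> surprisal_sum S (\<lambda>m. (joint v A m, joint v (A \<inter> B) m))
       + surprisal_sum S (\<lambda>m. (joint v B m, joint v (A \<inter> B) m))"
    by (rule surprisal_sum_submodular[OF S])
  moreover have "surprisal_sum S (\<lambda>m. (joint v A m, joint v B m, joint v (A \<inter> B) m))
      = surprisal_sum S (joint v (A \<union> B))"
    "surprisal_sum S (\<lambda>m. (joint v A m, joint v (A \<inter> B) m)) = surprisal_sum S (joint v A)"
    "surprisal_sum S (\<lambda>m. (joint v B m, joint v (A \<inter> B) m)) = surprisal_sum S (joint v B)"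
    by (rule surprisal_sum_cong; auto simp: joint_eq_iff)+
  ultimately show "surprisal_sum S (joint v (A \<union> B)) + surprisal_sum S (joint v (A \<inter> B))
      \<le> surprisal_sum S (joint v A) + surprisal_sum S (joint v B)"
    by simp
qed

lemma polymatroid_ent_joint:
  assumes "finite S" "1 \<le> q"
  shows "polymatroid (\<lambda>A. ent q S (joint v A))"
  using polymatroid_divide[OF polymatroid_surprisal_sum_joint[OF assms(1)],
      of "real (card S) * ln (real q)" v] assms by (simp add: ent_eq_surprisal_sum)

section \<open>The entropy polymatroid of an exact-repair code\<close>

lemma sum_split_at:
  fixes f :: "nat \<Rightarrow> real"
  assumes "j < k"
  shows "(\<Sum>i=1..k. f i) = (\<Sum>i=1..j. f i) + f (j + 1) + (\<Sum>i=j+2..k. f i)"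
proof -
  have "(\<Sum>i=1..j + (k - j). f i) = (\<Sum>i=1..j. f i) + (\<Sum>i=j+1..j + (k - j). f i)"
    by (rule sum.ub_add_nat) simp
  moreover have "(\<Sum>i=j+1..k. f i) = f (j + 1) + (\<Sum>i=Suc (j + 1)..k. f i)"
    by (rule sum.atLeast_Suc_atMost) (use assms in simp)
  ultimately show ?thesis using assms by simp
qed

text \<open>\<open>Helper y x\<close> is the data that node \<open>x\<close> sends for the repair of node \<open>y\<close>.\<close>
datatype code_var = Stored nat | Helper nat nat

text \<open>Node \<open>y\<close> is repaired from all the others, and in
  \<open>repair\<close> the helper data of the nodes in \<open>P\<close> is replaced by their (more informative) contents.\<close>
locale exact_repair_polymatroid = polymatroid h
  for h :: "code_var set \<Rightarrow> real" +
  fixes k d :: nat and \<alpha> \<beta> B :: real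
  assumes stored_le: "i \<in> {1..d+1} \<Longrightarrow> h {Stored i} \<le> \<alpha>"
    and helper_le: "y \<in> {1..d+1} \<Longrightarrow> x \<in> {1..d+1} \<Longrightarrow> x \<noteq> y \<Longrightarrow> h {Helper y x} \<le> \<beta>"
    and helper_determined: "h {Helper y x, Stored x} = h {Stored x}"
    and repair: "P \<subseteq> {1..d+1} \<Longrightarrow> y \<in> {1..d+1} - P \<Longrightarrow>
      h (insert (Stored y) (Stored ` P \<union> Helper y ` ({1..d+1} - P - {y})))
        = h (Stored ` P \<union> Helper y ` ({1..d+1} - P - {y}))"
    and data_collection: "K \<subseteq> {1..d+1} \<Longrightarrow> card K = k \<Longrightarrow> h (Stored ` K) = B"
    and k_le_d: "k \<le> d" and beta_pos: "0 < \<beta>"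
begin

abbreviation nodes :: "nat set" where
  "nodes \<equiv> {1..d+1}"

definition cutset :: "nat \<Rightarrow> real" where
  "cutset i = min \<alpha> ((real d - real i + 1) * \<beta>)"

definition gap :: real where
  "gap = Bhat k d \<alpha> \<beta> - B"

lemma Bhat_eq_sum_cutset: "Bhat k d \<alpha> \<beta> = (\<Sum>i=1..k. cutset i)"
  by (simp add: Bhat_def cutset_def)

lemma card_other_nodes:
  assumes "P \<subseteq> nodes" "y \<in> nodes - P"
  shows "card (nodes - P - {y}) = d - card P" "card P \<le> d"
proof -
  have "finite P" using assms(1) finite_subset by blast
  moreover have "card (insert y P) \<le> card nodes" using assms by (intro card_mono) auto
  ultimately show "card (nodes - P - {y}) = d - card P" "card P \<le> d"
    using assms by (auto simp: card_Diff_subset card_Diff_singleton)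
qed

lemma h_helpers_le:
  assumes "y \<in> nodes" "X \<subseteq> nodes - {y}"
  shows "h (Helper y ` X) \<le> real (card X) * \<beta>"
proof -
  have "finite X" using assms(2) finite_subset by blast
  then show ?thesis using assms(2)
  proof (induction X rule: finite_induct)
    case empty
    then show ?case by (simp add: h_empty)
  next
    case (insert x X)
    have "h (Helper y ` insert x X) \<le> h {Helper y x} + h (Helper y ` X)"
      using hcond_le[of "{Helper y x}" "Helper y ` X"] h_nonneg by simp
    also have "\<dots> \<le> \<beta> + real (card X) * \<beta>"
      using helper_le[of y x] insert assms(1) by (intro add_mono) auto
    finally show ?case using insert by (simp add: algebra_simps)
  qed
qed

lemma h_repair_helpers_le:
  assumes "P \<subseteq> nodes" "y \<in> nodes - P"
  shows "h (insert (Stored y) (Stored ` P \<union> Helper y ` (nodes - P - {y})))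
    \<le> h (Stored ` P) + (real d - real (card P)) * \<beta>"
proof -
  have "h (insert (Stored y) (Stored ` P \<union> Helper y ` (nodes - P - {y})))
      = h (Stored ` P \<union> Helper y ` (nodes - P - {y}))"
    by (rule repair) (use assms in auto)
  also have "\<dots> \<le> h (Stored ` P) + h (Helper y ` (nodes - P - {y}))"
    using hcond_le[of "Stored ` P" "Helper y ` (nodes - P - {y})"] h_nonneg by (simp add: Un_commute)
  also have "\<dots> \<le> h (Stored ` P) + (real d - real (card P)) * \<beta>"
    using h_helpers_le[of y "nodes - P - {y}"] card_other_nodes[OF assms] assms
    by (auto simp: of_nat_diff)
  finally show ?thesis .
qed

lemma node_increment_le:
  assumes "P \<subseteq> nodes" "y \<in> nodes - P"
  shows "hcond {Stored y} (Stored ` P) \<le> cutset (card P + 1)"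
proof -
  have "hcond {Stored y} (Stored ` P) \<le> \<alpha>"
    using hcond_le[of "{Stored y}" "Stored ` P"] stored_le[of y] assms by simp
  moreover have "h ({Stored y} \<union> Stored ` P)
      \<le> h (insert (Stored y) (Stored ` P \<union> Helper y ` (nodes - P - {y})))"
    by (rule h_mono) auto
  ultimately show ?thesis
    using h_repair_helpers_le[OF assms] by (simp add: cutset_def)
qed

lemma nodes_increment_le_sum:
  assumes "Q \<subseteq> nodes" "R \<subseteq> nodes - Q"
  shows "hcond (Stored ` R) (Stored ` Q) \<le> (\<Sum>i=card Q + 1..card Q + card R. cutset i)"
proof -
  have "finite R" using assms(2) finite_subset by blast
  then show ?thesis using assms(2)
  proof (induction R rule: finite_induct)
    case empty
    then show ?case by simp
  next
    case (insert y R)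
    have "card (R \<union> Q) = card Q + card R"
      using insert assms(1) finite_subset[OF assms(1)] by (subst card_Un_disjoint) auto
    then have "hcond {Stored y} (Stored ` (R \<union> Q)) \<le> cutset (card Q + card R + 1)"
      using node_increment_le[of "R \<union> Q" y] insert assms by auto
    moreover have "Stored ` insert y R \<union> Stored ` Q = {Stored y} \<union> Stored ` (R \<union> Q)" by auto
    ultimately show ?case using insert by (simp add: image_Un Un_assoc)
  qed
qed

lemma node_increment_ge:
  assumes P: "P \<subseteq> nodes" and y: "y \<in> nodes - P" and Pk: "card P < k"
  shows "cutset (card P + 1) - gap \<le> hcond {Stored y} (Stored ` P)"
proof -
  have "k - card P - 1 \<le> card (nodes - P - {y})"
    using card_other_nodes[OF P y] k_le_d by simp
  then obtain R where R: "R \<subseteq> nodes - P - {y}" "card R = k - card P - 1"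
    by (meson obtain_subset_with_card_n)
  have fP: "finite P" using P finite_subset by blast
  have cPy: "card (insert y P) = card P + 1" using fP y by simp
  have cK: "card (insert y P \<union> R) = k"
    using R Pk cPy finite_subset[OF R(1)] fP by (subst card_Un_disjoint) auto
  have "B = h (Stored ` (insert y P \<union> R))"
    by (rule data_collection[symmetric]) (use P y R cK in auto)
  also have "\<dots> = h (Stored ` P) + hcond {Stored y} (Stored ` P)
      + hcond (Stored ` R) (Stored ` insert y P)"
  proof -
    have "Stored ` R \<union> Stored ` insert y P = Stored ` (insert y P \<union> R)"
      "{Stored y} \<union> Stored ` P = Stored ` insert y P" by auto
    then show ?thesis by simp
  qed
  also have "\<dots> \<le> (\<Sum>i=1..card P. cutset i) + hcond {Stored y} (Stored ` P)
      + (\<Sum>i=card P + 2..k. cutset i)"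
  proof -
    have "h (Stored ` P) \<le> (\<Sum>i=1..card P. cutset i)"
      using nodes_increment_le_sum[of "{}" P] P by (simp add: h_empty)
    moreover have "hcond (Stored ` R) (Stored ` insert y P) \<le> (\<Sum>i=card P + 2..k. cutset i)"
    proof -
      have "R \<subseteq> nodes - insert y P" using R by auto
      then show ?thesis using nodes_increment_le_sum[of "insert y P" R] P y R cPy Pk by simp
    qed
    ultimately show ?thesis by linarith
  qed
  finally show ?thesis
    using sum_split_at[of "card P" k cutset] Pk unfolding gap_def Bhat_eq_sum_cutset by linarith
qed

lemma helpers_ge:
  assumes "P \<subseteq> nodes" "y \<in> nodes - P" "card P < k"
  shows "cutset (card P + 1) - gap \<le> hcond (Helper y ` (nodes - P - {y})) (Stored ` P)"
proof -
  have "h ({Stored y} \<union> Stored ` P) \<le> h (insert (Stored y) (Stored ` P \<union> Helper y ` (nodes - P - {y})))"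
    by (rule h_mono) auto
  also have "\<dots> = h (Helper y ` (nodes - P - {y}) \<union> Stored ` P)"
    using repair[of P y] assms by (auto simp: Un_commute)
  finally show ?thesis using node_increment_ge[OF assms] by linarith
qed

lemma helper_given_node_le:
  assumes P: "P \<subseteq> nodes" and y: "y \<in> nodes - P" and Pk: "card P < k" and x: "x \<in> nodes - P - {y}"
  shows "hcond {Helper y x} (insert (Stored y) (Stored ` P))
    \<le> (real d - real (card P)) * \<beta> - cutset (card P + 1) + gap"
proof -
  have "h ({Helper y x} \<union> insert (Stored y) (Stored ` P))
      \<le> h (insert (Stored y) (Stored ` P \<union> Helper y ` (nodes - P - {y})))"
    by (rule h_mono) (use x in auto)
  then show ?thesis
    using h_repair_helpers_le[OF P y] node_increment_ge[OF P y Pk] by simp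
qed

lemma helper_ge:
  assumes P: "P \<subseteq> nodes" and y: "y \<in> nodes - P" and Pk: "card P < k" and x: "x \<in> nodes - P - {y}"
    and C: "C \<subseteq> Stored ` P \<union> Helper y ` (nodes - P - {y, x})"
  shows "cutset (card P + 1) - (real d - real (card P) - 1) * \<beta> - gap \<le> hcond {Helper y x} C"
proof -
  define C0 where "C0 = Stored ` P \<union> Helper y ` (nodes - P - {y, x})"
  have "h ({Helper y x} \<union> C0) = h (Helper y ` (nodes - P - {y}) \<union> Stored ` P)"
    using x by (intro arg_cong[where f=h]) (auto simp: C0_def)
  moreover have "h C0 \<le> h (Stored ` P) + h (Helper y ` (nodes - P - {y, x}))"
    using hcond_le[of "Stored ` P" "Helper y ` (nodes - P - {y, x})"] h_nonneg by (simp add: C0_def Un_commute)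
  moreover have "h (Helper y ` (nodes - P - {y, x})) \<le> (real d - real (card P) - 1) * \<beta>"
  proof -
    have "nodes - P - {y, x} = nodes - P - {y} - {x}" by auto
    then have "card (nodes - P - {y, x}) = d - card P - 1"
      using card_other_nodes[OF P y] x by (simp add: card_Diff_singleton)
    moreover have "card P < d"
      using card_other_nodes[OF P y] x
      by (metis card_gt_0_iff emptyE finite_Diff finite_atLeastAtMost zero_less_diff)
    moreover have "h (Helper y ` (nodes - P - {y, x})) \<le> real (card (nodes - P - {y, x})) * \<beta>"
      by (rule h_helpers_le) (use y in auto)
    ultimately show ?thesis by (simp add: of_nat_diff algebra_simps)
  qed
  moreover have "hcond {Helper y x} C0 \<le> hcond {Helper y x} C"
    by (rule hcond_antimono) (use C in \<open>simp add: C0_def\<close>)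
  ultimately show ?thesis using helpers_ge[OF P y Pk] by linarith
qed

lemma stored_determines_helpers:
  assumes "finite Y"
  shows "h (insert (Stored x) ((\<lambda>y. Helper y x) ` Y)) = h {Stored x}"
  using assms
proof (induction Y rule: finite_induct)
  case empty
  then show ?case by simp
next
  case (insert y Y)
  have "h ({Stored x} \<union> {Helper y x} \<union> (\<lambda>y. Helper y x) ` Y) = h ({Stored x} \<union> (\<lambda>y. Helper y x) ` Y)"
    using helper_determined[of y x] by (intro determined_Un) (simp add: insert_commute)
  with insert.IH show ?case by (simp add: insert_commute)
qed

text \<open>As \<open>Helper x z\<close> is a function of \<open>Stored z\<close>, the information that \<open>U\<close> carries about
  \<open>Stored z\<close> splits into that about \<open>Helper x z\<close> and a remainder, which passes through \<open>Stored x\<close>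
  and hence through the other helpers of \<open>x\<close>.\<close>
lemma cmi_stored_le_helper:
  assumes P: "P \<subseteq> nodes" and Pk: "card P + 2 \<le> k" and x: "x \<in> nodes - P"
    and z: "z \<in> nodes - P" "z \<noteq> x" and U: "h ({Stored x} \<union> U) = h {Stored x}"
  shows "cmi U {Stored z} (Stored ` P)
    \<le> cmi U {Helper x z} (Stored ` P) + (real d - real (card P) - 1) * \<beta> - cutset (card P + 2) + gap"
proof -
  define C where "C = Stored ` P"
  define K where "K = insert (Helper x z) C"
  define R where "R = Helper x ` (nodes - P - {x, z})"
  have z_determines: "h (insert (Stored z) (insert (Helper x z) X)) = h (insert (Stored z) X)" for X
    using determined_Un[of "{Stored z}" "{Helper x z}" X] helper_determined[of x z]
    by (simp add: insert_commute)
  have "cmi U {Stored z} C = cmi U {Helper x z} C + cmi U {Stored z} K"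
    using z_determines[of "U \<union> C"] z_determines[of C] by (simp add: K_def insert_commute)
  moreover have "cmi U {Stored z} K \<le> cmi {Stored x} {Stored z} K"
    by (rule cmi_data_processing[OF U])
  moreover have "cmi {Stored x} {Stored z} K \<le> cmi (R \<union> K) {Stored z} K"
  proof (rule cmi_data_processing)
    have "R \<union> K = Stored ` P \<union> Helper x ` (nodes - P - {x})"
      using z by (auto simp: R_def K_def C_def)
    then show "h (R \<union> K \<union> {Stored x}) = h (R \<union> K)"
      using repair[of P x] P x by simp
  qed
  moreover have "hcond (R \<union> K) K \<le> (real d - real (card P) - 1) * \<beta>"
  proof -
    have "nodes - P - {x, z} = nodes - P - {x} - {z}" by auto
    then have "card (nodes - P - {x, z}) = d - card P - 1"
      using card_other_nodes[OF P x] z by (simp add: card_Diff_singleton)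
    moreover have "card P < d" using Pk k_le_d by simp
    moreover have "h R \<le> real (card (nodes - P - {x, z})) * \<beta>"
      unfolding R_def by (rule h_helpers_le) (use x in auto)
    ultimately show ?thesis
      using hcond_le[of R K] by (simp add: Un_assoc of_nat_diff algebra_simps)
  qed
  moreover have "cutset (card P + 2) - gap \<le> hcond (R \<union> K) ({Stored z} \<union> K)"
  proof -
    have "nodes - insert z P - {x} = nodes - P - {x, z}" by auto
    moreover have "card (insert z P) = card P + 1"
      using z finite_subset[OF P] by simp
    ultimately have "cutset (card P + 2) - gap \<le> hcond R (Stored ` insert z P)"
      using helpers_ge[of "insert z P" x] P x z Pk by (simp add: R_def)
    moreover have "h (R \<union> K \<union> ({Stored z} \<union> K)) = h (R \<union> Stored ` insert z P)"
      "h ({Stored z} \<union> K) = h (Stored ` insert z P)"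
      using z_determines[of "R \<union> C"] z_determines[of C] by (simp_all add: K_def C_def insert_commute)
    ultimately show ?thesis by simp
  qed
  ultimately show ?thesis unfolding C_def by linarith
qed

end

section \<open>Interior operating points\<close>

locale interior_point = exact_repair_polymatroid +
  fixes p :: nat and t :: real
  assumes one_le_p: "1 \<le> p" and p_plus_2_le_k: "p + 2 \<le> k"
    and alpha_interior: "\<alpha> = (real d - real p + 1 - t) * \<beta>" and t_le_1: "t \<le> 1"
begin

lemma cutset_interior:
  "i = p + 1 \<Longrightarrow> cutset i = (real d - real p) * \<beta>"
  "i = p + 2 \<Longrightarrow> cutset i = (real d - real p - 1) * \<beta>"
proof -
  have "\<alpha> - (real d - real p) * \<beta> = (1 - t) * \<beta>" using alpha_interior by (simp add: algebra_simps)
  moreover have "0 \<le> (1 - t) * \<beta>" using t_le_1 beta_pos by simp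
  moreover have "(real d - real p - 1) * \<beta> = (real d - real p) * \<beta> - \<beta>" by (simp add: algebra_simps)
  ultimately have "(real d - real p) * \<beta> \<le> \<alpha>" "(real d - real p - 1) * \<beta> \<le> \<alpha>"
    using beta_pos by linarith+
  then show "i = p + 1 \<Longrightarrow> cutset i = (real d - real p) * \<beta>"
    "i = p + 2 \<Longrightarrow> cutset i = (real d - real p - 1) * \<beta>"
    by (auto simp: cutset_def min_def algebra_simps)
qed

lemma helper_given_node_le_interior:
  assumes "P \<subseteq> nodes" "card P = p" "y \<in> nodes - P" "x \<in> nodes - P - {y}"
  shows "hcond {Helper y x} (insert (Stored y) (Stored ` P)) \<le> gap"
  using helper_given_node_le[OF assms(1,3) _ assms(4)] assms(2) p_plus_2_le_k
  by (simp add: cutset_interior)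

lemma helper_ge_interior:
  assumes "P \<subseteq> nodes" "p \<le> card P" "card P \<le> p + 1" "y \<in> nodes - P" "x \<in> nodes - P - {y}"
    and "C \<subseteq> Stored ` P \<union> Helper y ` (nodes - P - {y, x})"
  shows "\<beta> - gap \<le> hcond {Helper y x} C"
proof -
  from assms(2,3) consider "card P = p" | "card P = p + 1" by linarith
  then have "cutset (card P + 1) - (real d - real (card P) - 1) * \<beta> = \<beta>"
    by cases (simp_all add: cutset_interior algebra_simps)
  then show ?thesis
    using helper_ge[OF assms(1,4) _ assms(5,6)] assms(3) p_plus_2_le_k by simp
qed

lemma gap_ge_interior: "t * \<beta> \<le> 6 * gap"
proof -
  define A where "A = {1..<p}"
  define y z x a where "y = p" and "z = p + 1" and "x = p + 2" and "a = p + 3"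
  define C where "C = Stored ` A"
  define U V where "U = Helper y x" and "V = Helper z x"
  have A: "A \<subseteq> nodes" "finite A" "card A + 1 = p" "y \<notin> A" "z \<notin> A" "x \<notin> A" "a \<notin> A"
    using one_le_p p_plus_2_le_k k_le_d by (auto simp: A_def y_def z_def x_def a_def)
  have in_nodes: "y \<in> nodes" "z \<in> nodes" "x \<in> nodes" "a \<in> nodes"
    using one_le_p p_plus_2_le_k k_le_d by (auto simp: y_def z_def x_def a_def)
  have distinct: "y \<noteq> z" "y \<noteq> x" "y \<noteq> a" "z \<noteq> x" "z \<noteq> a" "x \<noteq> a"
    by (auto simp: y_def z_def x_def a_def)
  have x_le: "hcond {Stored x} C \<le> \<alpha>"
    using hcond_le[of "{Stored x}" C] stored_le[OF in_nodes(3)] by linarith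
  have x_ge: "cutset (p + 2) - gap \<le> hcond {Stored x} (Stored ` {y, z} \<union> C)"
    using node_increment_ge[of "insert y (insert z A)" x] A in_nodes distinct p_plus_2_le_k
    by (simp add: C_def)
  have U_le: "hcond {U} (Stored ` {y, z} \<union> C) \<le> gap"
    using helper_given_node_le_interior[of "insert z A" y x] A in_nodes distinct
    by (simp add: C_def U_def insert_commute)
  have V_le: "hcond {V} (Stored ` {y, z} \<union> C) \<le> gap"
    using helper_given_node_le_interior[of "insert y A" z x] A in_nodes distinct
    by (simp add: C_def V_def insert_commute)
  have U_le': "hcond {U} (Stored ` {a, y} \<union> C) \<le> gap"
    using helper_given_node_le_interior[of "insert a A" y x] A in_nodes distinct
    by (simp add: C_def U_def insert_commute)
  have U_ge: "\<beta> - gap \<le> hcond {U} C"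
    unfolding U_def by (rule helper_ge_interior[of "insert a A"]) (use A in_nodes distinct in \<open>auto simp: C_def\<close>)
  have V_ge: "\<beta> - gap \<le> hcond {V} (Stored ` {a, y} \<union> C)"
    unfolding V_def by (rule helper_ge_interior[of "insert a (insert y A)"])
      (use A in_nodes distinct in \<open>auto simp: C_def\<close>)
  have "h ({Stored x} \<union> ({U} \<union> {V})) = h {Stored x}"
    using stored_determines_helpers[of "{y, z}" x] by (simp add: U_def V_def insert_commute)
  then have "2 * \<beta> - 5 * gap \<le> cmi {Stored x} (Stored ` {y, z}) C"
    using cmi_ge_of_determined_pair[of "{Stored x}" "{U}" "{V}" C "Stored ` {a, y}" "Stored ` {y, z}"]
      U_ge U_le' V_ge U_le V_le by linarith
  moreover have "\<alpha> - cutset (p + 2) = 2 * \<beta> - t * \<beta>"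
    using alpha_interior by (simp add: cutset_interior algebra_simps)
  ultimately show ?thesis using x_le x_ge by linarith
qed

end

section \<open>The operating points next to the minimum-storage point\<close>

locale near_msr_point = exact_repair_polymatroid +
  fixes t :: real
  assumes three_le_k: "3 \<le> k" and alpha_near_msr: "\<alpha> = (real d - real k + 2 - t) * \<beta>"
    and t_nonneg: "0 \<le> t" and t_less_1: "t < 1"
begin

lemma cutset_alpha: "i + 1 = k \<Longrightarrow> cutset i = \<alpha>"
  and cutset_k: "i = k \<Longrightarrow> cutset i = (real d - real k + 1) * \<beta>"
proof -
  have "0 \<le> t * \<beta>" "t * \<beta> \<le> \<beta>" using t_nonneg t_less_1 beta_pos by (simp_all add: mult_left_le_one_le)
  moreover have "\<alpha> = (real d - real k + 2) * \<beta> - t * \<beta>" using alpha_near_msr by (simp add: algebra_simps)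
  moreover have "(real d - real (k - 1) + 1) * \<beta> = (real d - real k + 2) * \<beta>"
    using three_le_k by (simp add: of_nat_diff)
  moreover have "(real d - real k + 1) * \<beta> = (real d - real k + 2) * \<beta> - \<beta>" by (simp add: algebra_simps)
  ultimately have "\<alpha> \<le> (real d - real (k - 1) + 1) * \<beta>" "(real d - real k + 1) * \<beta> \<le> \<alpha>" by linarith+
  then show "i + 1 = k \<Longrightarrow> cutset i = \<alpha>" "i = k \<Longrightarrow> cutset i = (real d - real k + 1) * \<beta>"
    by (auto simp: cutset_def min_def algebra_simps)
qed

lemma Suc_k_minus: "Suc (k - 1) = k" "Suc (k - 2) = k - 1" "Suc (k - 3) = k - 2"
  using three_le_k by auto

lemma card_other_nodes_near_msr:
  assumes "P \<subseteq> nodes" "card P = k - 2" "x \<in> nodes - P"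
  shows "real (card (nodes - P - {x})) = real d - real k + 2" "2 \<le> card (nodes - P - {x})"
  using card_other_nodes[OF assms(1,3)] assms(2) three_le_k k_le_d by (simp_all add: of_nat_diff)

lemma helper_ge_near_msr:
  assumes P: "P \<subseteq> nodes" "card P = k - 2" and y: "y \<in> P" and x: "x \<in> nodes - P"
  shows "\<beta> - 2 * gap \<le> hcond {Helper y x} (Stored ` P)"
proof -
  define A where "A = P - {y}"
  have A: "A \<subseteq> nodes" "finite A" "card A = k - 3" "P = insert y A" "y \<notin> A"
    using P y finite_subset[OF P(1)] by (auto simp: A_def)
  obtain Q where Q: "Q \<subseteq> nodes - P - {x}" "card Q = 2"
    using card_other_nodes_near_msr[OF P x] by (meson obtain_subset_with_card_n)
  have "finite Q" using Q(2) card.infinite by fastforce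
  then have "card (A \<union> Q) = k - 1" using A Q three_le_k by (subst card_Un_disjoint) auto
  then have "cutset k - (real d - real k) * \<beta> - gap \<le> hcond {Helper y x} (Stored ` A)"
    using helper_ge[of "A \<union> Q" y x "Stored ` A"] A P Q x y three_le_k by (auto simp: of_nat_diff)
  then have U_ge: "\<beta> - gap \<le> hcond {Helper y x} (Stored ` A)"
    by (simp add: cutset_k algebra_simps)
  have "cmi {Helper y x} {Stored y} (Stored ` A) \<le> cmi {Stored x} {Stored y} (Stored ` A)"
    using helper_determined[of y x] by (intro cmi_data_processing) simp
  moreover have "hcond {Stored x} (Stored ` A) \<le> \<alpha>"
    using hcond_le[of "{Stored x}" "Stored ` A"] stored_le x by fastforce
  moreover have "\<alpha> - gap \<le> hcond {Stored x} (Stored ` P)"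
    using node_increment_ge[OF P(1) x] P three_le_k by (simp add: cutset_alpha)
  ultimately show ?thesis
    using U_ge A(4) by simp
qed

lemma cmi_helper_ge_near_msr:
  assumes P: "P \<subseteq> nodes" "card P = k - 2" and y: "y \<in> P" and x: "x \<in> nodes - P"
    and z: "z \<in> nodes - P - {x}"
  shows "hcond {Helper y x} (Stored ` P) - t * \<beta> - 2 * gap \<le> cmi {Helper y x} {Helper x z} (Stored ` P)"
proof -
  define A where "A = P - {y}"
  have A: "A \<subseteq> nodes" "card (insert z A) = k - 2" "P = insert y A"
    using P y z finite_subset[OF P(1)] by (auto simp: A_def card_Diff_singleton Suc_k_minus)
  have "hcond {Helper y x} (insert (Stored y) (Stored ` insert z A))
      \<le> (real d - real (card (insert z A))) * \<beta> - cutset (card (insert z A) + 1) + gap"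
    by (rule helper_given_node_le) (use A(1,2) P y x z three_le_k in \<open>auto simp: A_def\<close>)
  then have "hcond {Helper y x} ({Stored z} \<union> Stored ` P) \<le> (real d - real (k - 2)) * \<beta> - \<alpha> + gap"
    using A(2,3) three_le_k by (simp add: cutset_alpha insert_commute)
  moreover have "(real d - real (k - 2)) * \<beta> - \<alpha> = t * \<beta>"
    using alpha_near_msr three_le_k by (simp add: of_nat_diff algebra_simps)
  moreover have "cmi {Helper y x} {Stored z} (Stored ` P)
      \<le> cmi {Helper y x} {Helper x z} (Stored ` P) + (real d - real (card P) - 1) * \<beta> - cutset (card P + 2) + gap"
    by (rule cmi_stored_le_helper) (use P x z three_le_k helper_determined in auto)
  moreover have "(real d - real (card P) - 1) * \<beta> - cutset (card P + 2) = 0"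
    using P three_le_k by (simp add: cutset_k of_nat_diff algebra_simps)
  ultimately show ?thesis by linarith
qed

lemma helpers_ge_near_msr:
  assumes P: "P \<subseteq> nodes" "card P = k - 2" and x: "x \<in> nodes - P"
  shows "(real d - real k + 2) * \<beta> - 2 * gap \<le> hcond (Helper x ` (nodes - P - {x})) (Stored ` P)"
proof -
  define Z where "Z = nodes - P - {x}"
  have fP: "finite P" using finite_subset[OF P(1)] by simp
  have two: "2 \<le> card Z" "finite Z" using card_other_nodes_near_msr[OF P x] by (simp_all add: Z_def)
  then obtain z0 where z0: "z0 \<in> Z" by fastforce
  have "1 \<le> card (Z - {z0})" using two z0 by (simp add: card_Diff_singleton)
  then have "Z - {z0} \<noteq> {}" by (metis card.empty not_one_le_zero)
  then obtain z1 where z1: "z1 \<in> Z - {z0}" by blast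
  have "cutset (card (insert z1 P) + 1) - (real d - real (card (insert z1 P)) - 1) * \<beta> - gap
      \<le> hcond {Helper x z0} (Stored ` P)"
    by (rule helper_ge) (use P fP x z0 z1 three_le_k in \<open>auto simp: Z_def\<close>)
  then have first: "\<beta> - gap \<le> hcond {Helper x z0} (Stored ` P)"
    using P fP z1 three_le_k by (simp add: Z_def cutset_k of_nat_diff Suc_k_minus algebra_simps)
  have "cutset (card (insert z0 P) + 1) - gap
      \<le> hcond (Helper x ` (nodes - insert z0 P - {x})) (Stored ` insert z0 P)"
    by (rule helpers_ge) (use P x z0 three_le_k fP in \<open>auto simp: Z_def\<close>)
  moreover have "nodes - insert z0 P - {x} = Z - {z0}" by (auto simp: Z_def)
  ultimately have rest:
      "(real d - real k + 1) * \<beta> - gap \<le> hcond (Helper x ` (Z - {z0})) ({Stored z0} \<union> Stored ` P)"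
    using P fP z0 three_le_k by (simp add: Z_def cutset_k Suc_k_minus)
  have zero: "hcond {Helper x z0} ({Stored z0} \<union> Stored ` P) = 0"
    using determined_Un[of "{Stored z0}" "{Helper x z0}" "Stored ` P"] helper_determined[of x z0]
    by (simp add: insert_commute)
  have "{Helper x z0} \<union> Helper x ` (Z - {z0}) = Helper x ` Z" using z0 by auto
  then show ?thesis
    using hcond_Un_ge[of "{Helper x z0}" "Stored ` P" "Helper x ` (Z - {z0})" "{Stored z0}"] first rest zero
    unfolding Z_def[symmetric] \<open>{Helper x z0} \<union> Helper x ` (Z - {z0}) = Helper x ` Z\<close>
    by (simp add: algebra_simps)
qed

lemma gap_ge_near_msr:
  "(real d - real k + 1 - (real d - real k + 2) * t) * \<beta> \<le> 4 * (real d - real k + 2) * gap"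
proof -
  define m where "m = real d - real k + 1"
  define y x where "y = k - 2" and "x = k - 1"
  define P where "P = {1..<x}"
  define Z where "Z = nodes - P - {x}"
  define C where "C = Stored ` P"
  define D where "D = hcond {Helper y x} C"
  have P: "P \<subseteq> nodes" "card P = k - 2" "y \<in> P" "x \<in> nodes - P"
    using three_le_k k_le_d by (auto simp: P_def y_def x_def)
  have Z: "finite Z" "real (card Z) = m + 1"
    using card_other_nodes_near_msr[OF P(1,2,4)] by (simp_all add: Z_def m_def)
  txt \<open>The helpers of \<open>x\<close> are nearly independent given \<open>C\<close>, so \<open>Helper y x\<close> cannot share
    much information with all \<open>d - k + 2\<close> of them.\<close>
  have "(\<Sum>z\<in>Z. cmi {Helper y x} {Helper x z} C)
      \<le> cmi {Helper y x} (Helper x ` Z) C + (\<Sum>z\<in>Z. hcond {Helper x z} C) - hcond (Helper x ` Z) C"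
    using sum_cmi_le[OF Z(1), where U="{Helper y x}" and f="\<lambda>z. {Helper x z}" and C=C]
    by (simp add: UNION_singleton_eq_range)
  moreover have "(\<Sum>z\<in>Z. hcond {Helper x z} C) \<le> (m + 1) * \<beta>"
  proof -
    have "(\<Sum>z\<in>Z. hcond {Helper x z} C) \<le> (\<Sum>z\<in>Z. \<beta>)"
    proof (rule sum_mono)
      fix z assume "z \<in> Z"
      then show "hcond {Helper x z} C \<le> \<beta>"
        using hcond_le[of "{Helper x z}" C] helper_le[of x z] P by (auto simp: Z_def)
    qed
    then show ?thesis using Z by simp
  qed
  moreover have "(m + 1) * (D - t * \<beta> - 2 * gap) \<le> (\<Sum>z\<in>Z. cmi {Helper y x} {Helper x z} C)"
    using sum_mono[of Z, OF cmi_helper_ge_near_msr[OF P(1-4)]] Z unfolding Z_def C_def D_def by simp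
  moreover have "(m + 1) * \<beta> - 2 * gap \<le> hcond (Helper x ` Z) C"
    using helpers_ge_near_msr[OF P(1,2,4)] by (simp add: Z_def C_def m_def algebra_simps)
  moreover have "0 \<le> hcond {Helper y x} (Helper x ` Z \<union> C)" by (rule hcond_nonneg)
  ultimately have "(m + 1) * (D - t * \<beta> - 2 * gap) \<le> D + 2 * gap"
    unfolding D_def by linarith
  moreover have "m * (\<beta> - 2 * gap) \<le> m * D"
    using helper_ge_near_msr[OF P(1,2,3,4)] k_le_d by (intro mult_left_mono) (auto simp: m_def D_def C_def)
  moreover have
    "(m + 1) * (D - t * \<beta> - 2 * gap) = m * D + D - m * (t * \<beta>) - t * \<beta> - 2 * (m * gap) - 2 * gap"
    "m * (\<beta> - 2 * gap) = m * \<beta> - 2 * (m * gap)"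
    "(m - (m + 1) * t) * \<beta> = m * \<beta> - m * (t * \<beta>) - t * \<beta>"
    "4 * (m + 1) * gap = 4 * (m * gap) + 4 * gap"
    by (simp_all add: algebra_simps)
  ultimately have "(m - (m + 1) * t) * \<beta> \<le> 4 * (m + 1) * gap"
    by linarith
  then show ?thesis by (simp add: m_def algebra_simps)
qed

end

definition gap_constant :: "nat \<Rightarrow> real \<Rightarrow> nat \<Rightarrow> nat \<Rightarrow> real" where
  "gap_constant p t k d =
    (if t = 0 then 1 / 6
     else if p + 2 \<le> k then t / 6
     else (real d - real k + 1 - (real d - real k + 2) * t) / (4 * (real d - real k + 2)))"

lemma gap_constant_pos:
  assumes "3 \<le> k" "k \<le> d" "p \<le> k - 1" "0 \<le> t"
    and "(p = 1 \<and> t \<noteq> 0) \<or> (2 \<le> p \<and> p \<le> k - 2) \<or>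
         (p = k - 1 \<and> t < (real d - real k + 1) / (real d - real k + 2))"
  shows "0 < gap_constant p t k d"
proof -
  have "0 < real d - real k + 1 - (real d - real k + 2) * t" if "t \<noteq> 0" "\<not> p + 2 \<le> k"
  proof -
    have "t < (real d - real k + 1) / (real d - real k + 2)" using assms that by auto
    moreover have "0 < real d - real k + 2" using assms(2) by simp
    ultimately show ?thesis by (simp add: less_divide_eq algebra_simps)
  qed
  then show ?thesis using assms by (auto simp: gap_constant_def)
qed

context exact_repair_polymatroid
begin

lemma gap_ge:
  assumes k: "3 \<le> k" and p: "1 \<le> p" "p \<le> k - 1" and t: "0 \<le> t" "t < 1"
    and regime: "(p = 1 \<and> t \<noteq> 0) \<or> (2 \<le> p \<and> p \<le> k - 2) \<or>
         (p = k - 1 \<and> t < (real d - real k + 1) / (real d - real k + 2))"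
    and \<alpha>: "\<alpha> = (real d - real p + 1 - t) * \<beta>"
  shows "gap_constant p t k d * \<beta> \<le> gap"
proof (cases "t = 0")
  case True
  txt \<open>At \<open>t = 0\<close> the operating point \<open>p\<close> is the operating point \<open>p - 1\<close> with \<open>t = 1\<close>.\<close>
  have "2 \<le> p" using regime True k by auto
  then interpret interior_point h k d \<alpha> \<beta> B "p - 1" 1
    using p \<alpha> True by unfold_locales (simp_all add: of_nat_diff)
  have "1 * \<beta> \<le> 6 * gap" by (rule gap_ge_interior)
  then show ?thesis using True by (simp add: gap_constant_def)
next
  case t_pos: False
  show ?thesis
  proof (cases "p + 2 \<le> k")
    case True
    then interpret interior_point h k d \<alpha> \<beta> B p t
      using p \<alpha> t by unfold_locales simp_all
    show ?thesis using gap_ge_interior True t_pos by (simp add: gap_constant_def)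
  next
    case False
    then have "p = k - 1" using p by simp
    then have "\<alpha> = (real d - real k + 2 - t) * \<beta>" using \<alpha> k by (simp add: of_nat_diff)
    then interpret near_msr_point h k d \<alpha> \<beta> B t
      using k t by unfold_locales
    have "(real d - real k + 1 - (real d - real k + 2) * t) * \<beta> \<le> 4 * (real d - real k + 2) * gap"
      by (rule gap_ge_near_msr)
    moreover have "0 < 4 * (real d - real k + 2)" using k_le_d by simp
    ultimately show ?thesis using t_pos False
      by (simp add: gap_constant_def divide_le_eq mult.commute mult.left_commute)
  qed
qed

end

section \<open>Exact-repair codes\<close>

lemma finite_file_space: "finite (file_space q B)"
proof -
  have "file_space q B = {xs. set xs \<subseteq> {..<q} \<and> length xs = B}" by (auto simp: file_space_def)
  then show ?thesis by (simp add: finite_lists_length_eq)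
qed

lemma card_file_space: "card (file_space q B) = q ^ B"
proof -
  have "file_space q B = {xs. set xs \<subseteq> {..<q} \<and> length xs = B}" by (auto simp: file_space_def)
  then show ?thesis by (simp add: card_lists_length_eq)
qed

definition repair_helpers ::
  "nat \<Rightarrow> nat \<Rightarrow> real \<Rightarrow> (nat \<Rightarrow> nat list \<Rightarrow> nat) \<Rightarrow> nat \<Rightarrow> nat set \<Rightarrow> (nat \<Rightarrow> nat \<Rightarrow> nat) \<Rightarrow> bool" where
  "repair_helpers q B \<beta> W y D hx \<longleftrightarrow>
     (\<forall>x\<in>D. ent q (file_space q B) (\<lambda>m. hx x (W x m)) \<le> \<beta>) \<and>
     (\<forall>m1\<in>file_space q B. \<forall>m2\<in>file_space q B.
        (\<forall>x\<in>D. hx x (W x m1) = hx x (W x m2)) \<longrightarrow> W y m1 = W y m2)"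

definition chosen_helpers ::
  "nat \<Rightarrow> nat \<Rightarrow> nat \<Rightarrow> real \<Rightarrow> (nat \<Rightarrow> nat list \<Rightarrow> nat) \<Rightarrow> nat \<Rightarrow> nat \<Rightarrow> nat \<Rightarrow> nat" where
  "chosen_helpers q B d \<beta> W y = (SOME hx. repair_helpers q B \<beta> W y ({1..d+1} - {y}) hx)"

lemma repair_helpers_chosen_helpers:
  assumes "exact_repair_code q n k d \<alpha> \<beta> B W" "d + 1 \<le> n" "y \<in> {1..d+1}"
  shows "repair_helpers q B \<beta> W y ({1..d+1} - {y}) (chosen_helpers q B d \<beta> W y)"
proof -
  have "{1..d+1} - {y} \<subseteq> {1..n} - {y}" "card ({1..d+1} - {y}) = d" using assms(2,3) by auto
  then have "\<exists>hx. repair_helpers q B \<beta> W y ({1..d+1} - {y}) hx"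
    using assms unfolding exact_repair_code_def repair_helpers_def by auto
  then show ?thesis unfolding chosen_helpers_def by (rule someI_ex)
qed

definition code_rv ::
  "(nat \<Rightarrow> nat \<Rightarrow> nat \<Rightarrow> nat) \<Rightarrow> (nat \<Rightarrow> nat list \<Rightarrow> nat) \<Rightarrow> code_var \<Rightarrow> nat list \<Rightarrow> nat" where
  "code_rv hx W a m = (case a of Stored i \<Rightarrow> W i m | Helper y x \<Rightarrow> hx y x (W x m))"

lemma code_rv_simps [simp]:
  "code_rv hx W (Stored i) = W i" "code_rv hx W (Helper y x) = (\<lambda>m. hx y x (W x m))"
  by (simp_all add: code_rv_def fun_eq_iff)

lemma inj_on_joint_stored:
  assumes code: "exact_repair_code q n k d \<alpha> \<beta> B W" and n: "d + 1 \<le> n"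
    and K: "K \<subseteq> {1..d+1}" "card K = k"
  shows "inj_on (joint (code_rv hx W) (Stored ` K)) (file_space q B)"
proof (rule inj_onI)
  fix m1 m2 assume "m1 \<in> file_space q B" "m2 \<in> file_space q B"
    and "joint (code_rv hx W) (Stored ` K) m1 = joint (code_rv hx W) (Stored ` K) m2"
  moreover have "K \<subseteq> {1..n}" using K n by auto
  ultimately show "m1 = m2"
    using conjunct1[OF conjunct2[OF code[unfolded exact_repair_code_def]]] K by (auto simp: joint_eq_iff)
qed

lemma stored_determined_by_repair_data:
  assumes code: "exact_repair_code q n k d \<alpha> \<beta> B W" and n: "d + 1 \<le> n"
    and P: "P \<subseteq> {1..d+1}" and y: "y \<in> {1..d+1} - P"
    and m: "m1 \<in> file_space q B" "m2 \<in> file_space q B"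
    and eq: "\<forall>a\<in>Stored ` P \<union> Helper y ` ({1..d+1} - P - {y}).
      code_rv (chosen_helpers q B d \<beta> W) W a m1 = code_rv (chosen_helpers q B d \<beta> W) W a m2"
  shows "W y m1 = W y m2"
proof -
  define hx where "hx = chosen_helpers q B d \<beta> W y"
  have "hx x (W x m1) = hx x (W x m2)" if x: "x \<in> {1..d+1} - {y}" for x
  proof (cases "x \<in> P")
    case True
    then have "Stored x \<in> Stored ` P \<union> Helper y ` ({1..d+1} - P - {y})" by simp
    from bspec[OF eq this] show ?thesis by (simp add: hx_def)
  next
    case False
    then have "Helper y x \<in> Stored ` P \<union> Helper y ` ({1..d+1} - P - {y})" using x by simp
    from bspec[OF eq this] show ?thesis by (simp add: hx_def)
  qed
  then show ?thesis
    using repair_helpers_chosen_helpers[OF code n, of y] y m unfolding repair_helpers_def hx_def by blast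
qed

lemma exact_repair_polymatroid_of_code:
  assumes q: "primepow q" and n: "d + 1 \<le> n" and \<beta>: "0 < \<beta>" and kd: "k \<le> d"
    and code: "exact_repair_code q n k d \<alpha> \<beta> B W"
  shows "exact_repair_polymatroid
    (\<lambda>A. ent q (file_space q B) (joint (code_rv (chosen_helpers q B d \<beta> W) W) A)) k d \<alpha> \<beta> (real B)"
proof -
  define S where "S = file_space q B"
  define v where "v = code_rv (chosen_helpers q B d \<beta> W) W"
  have S: "finite S" "card S = q ^ B" by (simp_all add: S_def finite_file_space card_file_space)
  have q1: "1 < q" using primepow_gt_Suc_0[OF q] by simp
  show ?thesis
    unfolding S_def[symmetric] v_def[symmetric]
  proof (intro exact_repair_polymatroid.intro exact_repair_polymatroid_axioms.intro)
    show "polymatroid (\<lambda>A. ent q S (joint v A))"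
      using q1 by (intro polymatroid_ent_joint[OF S(1)]) simp
  next
    fix i assume "i \<in> {1..d+1}"
    then have "ent q S (W i) \<le> \<alpha>"
      using conjunct1[OF code[unfolded exact_repair_code_def]] n by (auto simp: S_def)
    then show "ent q S (joint v {Stored i}) \<le> \<alpha>"
      by (simp add: ent_joint_singleton[OF S(1)] v_def)
  next
    fix y x assume yx: "y \<in> {1..d+1}" "x \<in> {1..d+1}" "x \<noteq> y"
    then have "repair_helpers q B \<beta> W y ({1..d+1} - {y}) (chosen_helpers q B d \<beta> W y)"
      by (intro repair_helpers_chosen_helpers[OF code n]) simp
    then have "ent q S (\<lambda>m. chosen_helpers q B d \<beta> W y x (W x m)) \<le> \<beta>"
      using yx unfolding repair_helpers_def S_def by blast
    then show "ent q S (joint v {Helper y x}) \<le> \<beta>"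
      by (simp add: ent_joint_singleton[OF S(1)] v_def)
  next
    fix y x
    have "ent q S (joint v ({Stored x} \<union> {Helper y x})) = ent q S (joint v {Stored x})"
      by (rule ent_joint_determined[OF S(1)]) (simp add: v_def)
    then show "ent q S (joint v {Helper y x, Stored x}) = ent q S (joint v {Stored x})"
      by (simp add: insert_commute)
  next
    fix P y assume P: "P \<subseteq> {1..d+1}" and y: "y \<in> {1..d+1} - P"
    define X where "X = Stored ` P \<union> Helper y ` ({1..d+1} - P - {y})"
    have "ent q S (joint v (X \<union> {Stored y})) = ent q S (joint v X)"
    proof (rule ent_joint_determined[OF S(1)])
      fix m1 m2 assume "m1 \<in> S" "m2 \<in> S" "\<forall>a\<in>X. v a m1 = v a m2"
      then have "W y m1 = W y m2"
        using stored_determined_by_repair_data[OF code n P y] unfolding X_def v_def S_def by blast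
      then show "\<forall>a\<in>{Stored y}. v a m1 = v a m2" by (simp add: v_def)
    qed
    then show "ent q S (joint v (insert (Stored y) X)) = ent q S (joint v X)" by simp
  next
    fix K assume "K \<subseteq> {1..d+1}" "card K = k"
    then have "inj_on (joint v (Stored ` K)) S"
      unfolding S_def v_def by (rule inj_on_joint_stored[OF code n])
    moreover have "S \<noteq> {}" using S q1 by (auto simp: card_gt_0_iff)
    ultimately show "ent q S (joint v (Stored ` K)) = real B"
      using S q1 by (simp add: ent_inj log_nat_power)
  qed (use kd \<beta> in auto)
qed

lemma ratio_bound_of_deficit:
  fixes \<kappa> \<epsilon> \<beta> b :: real
  assumes "0 < \<kappa>" "0 < \<beta>" "0 < b" "b \<le> (\<kappa> - \<epsilon>) * \<beta>"
  shows "\<beta> / (\<kappa> * \<beta>) + \<epsilon> / \<kappa>\<^sup>2 \<le> \<beta> / b"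
proof -
  have "0 < \<kappa> - \<epsilon>" using assms by (smt (verit) mult_nonpos_nonneg)
  have "\<beta> / (\<kappa> * \<beta>) + \<epsilon> / \<kappa>\<^sup>2 = (\<kappa> + \<epsilon>) / \<kappa>\<^sup>2"
    using assms by (simp add: field_simps power2_eq_square)
  also have "\<dots> \<le> 1 / (\<kappa> - \<epsilon>)"
    using \<open>0 < \<kappa> - \<epsilon>\<close> assms(1) by (simp add: field_simps power2_eq_square)
  also have "\<dots> = \<beta> / ((\<kappa> - \<epsilon>) * \<beta>)" using assms(2) by simp
  also have "\<dots> \<le> \<beta> / b" using assms by (intro divide_left_mono) auto
  finally show ?thesis .
qed

theorem corollary1:
  fixes k d p :: nat and t :: real
  assumes "3 \<le> k" and "k \<le> d"
    and "1 \<le> p" and "p \<le> k - 1"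
    and "0 \<le> t" and "t < 1"
    and "(p = 1 \<and> t \<noteq> 0) \<or> (2 \<le> p \<and> p \<le> k - 2) \<or>
         (p = k - 1 \<and> t < (real d - real k + 1) / (real d - real k + 2))"
  shows "\<exists>\<delta>0 > 0. \<forall>(q::nat) (n::nat) (\<alpha>::real) (\<beta>::real) (B::nat) W.
           primepow q \<and> d + 1 \<le> n \<and> 0 < \<alpha> \<and> 0 < \<beta> \<and> 0 < B \<and>
           \<alpha> = (real d - real p + 1 - t) * \<beta> \<and>
           exact_repair_code q n k d \<alpha> \<beta> B W
           \<longrightarrow> \<beta> / real B \<ge> \<beta> / Bhat k d \<alpha> \<beta> + \<delta>0"
proof -
  define \<epsilon> where "\<epsilon> = gap_constant p t k d"
  define \<kappa> where "\<kappa> = (\<Sum>i=1..k. min (real d - real p + 1 - t) (real d - real i + 1))"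
  have \<epsilon>_pos: "0 < \<epsilon>" unfolding \<epsilon>_def by (rule gap_constant_pos) (use assms in auto)
  have \<kappa>_pos: "0 < \<kappa>"
    unfolding \<kappa>_def using assms by (intro sum_pos) (auto simp: of_nat_diff)
  show ?thesis
  proof (intro exI[of _ "\<epsilon> / \<kappa>\<^sup>2"] conjI allI impI)
    show "0 < \<epsilon> / \<kappa>\<^sup>2" using \<epsilon>_pos \<kappa>_pos by simp
  next
    fix q n :: nat and \<alpha> \<beta> :: real and B :: nat and W
    assume "primepow q \<and> d + 1 \<le> n \<and> 0 < \<alpha> \<and> 0 < \<beta> \<and> 0 < B \<and>
      \<alpha> = (real d - real p + 1 - t) * \<beta> \<and> exact_repair_code q n k d \<alpha> \<beta> B W"
    then have q: "primepow q" and n: "d + 1 \<le> n" and \<beta>: "0 < \<beta>" and B: "0 < B"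
      and \<alpha>: "\<alpha> = (real d - real p + 1 - t) * \<beta>" and code: "exact_repair_code q n k d \<alpha> \<beta> B W"
      by auto
    interpret exact_repair_polymatroid
      "\<lambda>A. ent q (file_space q B) (joint (code_rv (chosen_helpers q B d \<beta> W) W) A)" k d \<alpha> \<beta> "real B"
      using exact_repair_polymatroid_of_code[OF q n \<beta> _ code] assms(2) .
    have "\<epsilon> * \<beta> \<le> gap" unfolding \<epsilon>_def by (rule gap_ge) (use assms \<alpha> in auto)
    moreover have "Bhat k d \<alpha> \<beta> = \<kappa> * \<beta>"
      unfolding Bhat_def \<kappa>_def \<alpha> sum_distrib_right using \<beta> by (simp add: min_mult_distrib_right)
    ultimately show "\<beta> / Bhat k d \<alpha> \<beta> + \<epsilon> / \<kappa>\<^sup>2 \<le> \<beta> / real B"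
      using ratio_bound_of_deficit[OF \<kappa>_pos \<beta>, of "real B" \<epsilon>] B unfolding gap_def
      by (simp add: algebra_simps)
  qed
qed

end
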